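(* Let $c\ge2$, let $G$ be a graph, $k\ge0$, $v\in V(G)$, and let $H_v\subseteq V(G)\setminus\{v\}$ be such that $G\setminus H_v$ contains no $\theta_c$ minor. Let $D_1,\dots,D_s$ be the connected components of $G\setminus(H_v\cup\{v\})$ that contain a neighbor of $v$, and assume each $D_i$ contains a vertex adjacent to some vertex of $H_v$. Let $\mathcal{G}$ be the bipartite graph with parts $H_v$ and $D=\{d_1,\dots,d_s\}$, where $w\in H_v$ is adjacent to $d_i$ iff $w$ has a neighbor in $D_i$. Let $S\subseteq H_v$ and $T\subseteq D$ be such that $S$ has $|S|$ $c$-stars in $T$ in $\mathcal{G}$ and every neighbor in $\mathcal{G}$ of a vertex of $T$ lies in $S$. Let $G_R$ be obtained from $G$ by deleting all edges between $v$ and vertices of $\bigcup_{d_i\in T}D_i$, and, for each $w\in S$, adding edges between $v$ and $w$ so that $v$ and $w$ are joined by at least $c$ parallel edges (adding none if they already are). Then $G$ has a set of at most $k$ vertices whose deletion leaves a graph with no $\theta_c$ minor if and only if $G_R$ has such a set.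
   Context: Graphs may have parallel edges; contraction keeps parallel edges and deletes loops. $\theta_c$ is the graph with two vertices joined by $c$ parallel edges. In a bipartite graph with parts $A,B$, for $S\subseteq A$, $T\subseteq B$, $S$ has $|S|$ $c$-stars in $T$ if to each $x\in S$ one can associate $F_x\subseteq N(x)\cap T$ with $|F_x|=c$ and $F_x\cap F_y=\emptyset$ for distinct $x,y\in S$. *)

theory Defs
  imports Main
begin

text \<open>Finite loopless multigraphs: a vertex set and a symmetric edge-multiplicity
function (number of parallel edges between two vertices).\<close>

record 'a mgraph =
  verts :: "'a set"
  mult  :: "'a \<Rightarrow> 'a \<Rightarrow> nat"

definition wf_mgraph :: "'a mgraph \<Rightarrow> bool" where
  "wf_mgraph G \<longleftrightarrow> finite (verts G)
     \<and> (\<forall>x y. mult G x y = mult G y x)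
     \<and> (\<forall>x. mult G x x = 0)
     \<and> (\<forall>x y. mult G x y > 0 \<longrightarrow> x \<in> verts G \<and> y \<in> verts G)"

definition adj :: "'a mgraph \<Rightarrow> 'a \<Rightarrow> 'a \<Rightarrow> bool" where
  "adj G x y \<longleftrightarrow> mult G x y > 0"

definition delete_verts :: "'a mgraph \<Rightarrow> 'a set \<Rightarrow> 'a mgraph" where
  "delete_verts G X = \<lparr> verts = verts G - X,
     mult = (\<lambda>x y. if x \<in> X \<or> y \<in> X then 0 else mult G x y) \<rparr>"

definition connected_set :: "'a mgraph \<Rightarrow> 'a set \<Rightarrow> bool" where
  "connected_set G X \<longleftrightarrow> X \<noteq> {} \<and> X \<subseteq> verts G \<and>
     (\<forall>x\<in>X. \<forall>y\<in>X. (x, y) \<in> {(a, b). a \<in> X \<and> b \<in> X \<and> adj G a b}\<^sup>*)"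

definition components :: "'a mgraph \<Rightarrow> 'a set set" where
  "components G = {C. connected_set G C \<and>
     (\<forall>x\<in>C. \<forall>y\<in>verts G. adj G x y \<longrightarrow> y \<in> C)}"

text \<open>H is a minor of G, via a minor model: disjoint connected branch sets, and
for distinct branch vertices x, y at least (mult H x y) edges of G between the
branch sets of x and y (distinct pairs use disjoint edge sets, so this is an
injective assignment of edges of H to edges of G).\<close>
definition has_minor :: "'a mgraph \<Rightarrow> 'b mgraph \<Rightarrow> bool" where
  "has_minor G H \<longleftrightarrow> (\<exists>\<phi> :: 'b \<Rightarrow> 'a set.
     (\<forall>x\<in>verts H. connected_set G (\<phi> x)) \<and>
     (\<forall>x\<in>verts H. \<forall>y\<in>verts H. x \<noteq> y \<longrightarrow> \<phi> x \<inter> \<phi> y = {}) \<and>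
     (\<forall>x\<in>verts H. \<forall>y\<in>verts H. x \<noteq> y \<longrightarrow>
        mult H x y \<le> (\<Sum>a\<in>\<phi> x. \<Sum>b\<in>\<phi> y. mult G a b)))"

definition theta :: "nat \<Rightarrow> nat mgraph" where
  "theta c = \<lparr> verts = {0, 1},
     mult = (\<lambda>x y. if (x = 0 \<and> y = 1) \<or> (x = 1 \<and> y = 0) then c else 0) \<rparr>"

definition theta_free :: "nat \<Rightarrow> 'a mgraph \<Rightarrow> bool" where
  "theta_free c G \<longleftrightarrow> \<not> has_minor G (theta c)"

definition theta_deletion_set :: "nat \<Rightarrow> nat \<Rightarrow> 'a mgraph \<Rightarrow> bool" where
  "theta_deletion_set c k G \<longleftrightarrow>
     (\<exists>X. X \<subseteq> verts G \<and> card X \<le> k \<and> theta_free c (delete_verts G X))"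

definition D_comps :: "'a mgraph \<Rightarrow> 'a \<Rightarrow> 'a set \<Rightarrow> 'a set set" where
  "D_comps G v Hv = {C \<in> components (delete_verts G (insert v Hv)).
                       \<exists>x\<in>C. adj G v x}"

definition badj :: "'a mgraph \<Rightarrow> 'a \<Rightarrow> 'a set \<Rightarrow> bool" where
  "badj G w C \<longleftrightarrow> (\<exists>x\<in>C. adj G w x)"

definition has_c_stars :: "nat \<Rightarrow> 'a mgraph \<Rightarrow> 'a set \<Rightarrow> 'a set set \<Rightarrow> bool" where
  "has_c_stars c G S T \<longleftrightarrow> (\<exists>F :: 'a \<Rightarrow> 'a set set.
     (\<forall>x\<in>S. F x \<subseteq> {C \<in> T. badj G x C} \<and> card (F x) = c) \<and>
     (\<forall>x\<in>S. \<forall>y\<in>S. x \<noteq> y \<longrightarrow> F x \<inter> F y = {}))"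

definition reduce :: "nat \<Rightarrow> 'a mgraph \<Rightarrow> 'a \<Rightarrow> 'a set \<Rightarrow> 'a set set \<Rightarrow> 'a mgraph" where
  "reduce c G v S T = \<lparr> verts = verts G,
     mult = (\<lambda>a b.
       if (a = v \<and> b \<in> \<Union>T) \<or> (b = v \<and> a \<in> \<Union>T) then 0
       else if (a = v \<and> b \<in> S) \<or> (b = v \<and> a \<in> S) then max (mult G a b) c
       else mult G a b) \<rparr>"

end

theory Submission
  imports Defs
begin

text \<open>
  The proof rests on gluing at a cut vertex: if a graph is the union of two parts sharing
  only the vertex v, with no edges between them, and both parts are theta_c-free, then so is
  the whole graph (a theta_c minor is just two disjoint connected sets joined by c edges).
  Once S is deleted and v kept, v cuts U off from the rest of both G and G_R, and the U side
  together with v is a subgraph of G - H_v, hence theta_c-free.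

  Forward direction: a solution X of G avoiding v hits, for every w in S - X, one of the c
  components of its star (else v and the star form a theta_c minor); as these components are
  disjoint, |S - X| <= |X \<inter> U|, so (X - U) \<union> S is no larger, and it is a solution of G_R.
  Backward direction: a solution of G_R avoiding v contains S (because of the c parallel
  edges between v and S) and is then a solution of G. Solutions containing v are the same
  for both graphs.
\<close>

definition adj_within :: "'a mgraph \<Rightarrow> 'a set \<Rightarrow> ('a \<times> 'a) set" where
  "adj_within G A = {(a, b). a \<in> A \<and> b \<in> A \<and> adj G a b}"

lemma connected_set_iff:
  "connected_set G X \<longleftrightarrow> X \<noteq> {} \<and> X \<subseteq> verts G \<and> (\<forall>x\<in>X. \<forall>y\<in>X. (x, y) \<in> (adj_within G X)\<^sup>*)"
  by (simp add: connected_set_def adj_within_def)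

lemma connected_singleton: "x \<in> verts G \<Longrightarrow> connected_set G {x}"
  by (simp add: connected_set_iff)

lemma connected_if_all_reach:
  assumes sym: "\<forall>x y. mult G x y = mult G y x" and "w \<in> B" "B \<subseteq> verts G"
    and reach: "\<forall>x\<in>B. (x, w) \<in> (adj_within G B)\<^sup>*"
  shows "connected_set G B"
proof -
  have "sym (adj_within G B)" using sym by (auto simp: sym_def adj_within_def adj_def)
  then have symR: "sym ((adj_within G B)\<^sup>*)" by (rule sym_rtrancl)
  have "(x, y) \<in> (adj_within G B)\<^sup>*" if "x \<in> B" "y \<in> B" for x y
  proof -
    have "(w, y) \<in> (adj_within G B)\<^sup>*" using reach that symR by (blast dest: symD)
    with reach that show ?thesis by (blast intro: rtrancl_trans)
  qed
  with assms show ?thesis by (auto simp: connected_set_iff)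
qed

lemma components_eq:
  assumes "C1 \<in> components H" "C2 \<in> components H" "x \<in> C1" "x \<in> C2"
  shows "C1 = C2"
proof -
  have sub: "C2 \<subseteq> C1" if "C1 \<in> components H" "C2 \<in> components H" "x \<in> C1" "x \<in> C2"
    for C1 C2
  proof
    fix y assume "y \<in> C2"
    have conn: "connected_set H C2" and closed: "\<forall>a\<in>C1. \<forall>b\<in>verts H. adj H a b \<longrightarrow> b \<in> C1"
      using that by (auto simp: components_def)
    then have "(x, y) \<in> (adj_within H C2)\<^sup>*" and "C2 \<subseteq> verts H"
      using \<open>y \<in> C2\<close> \<open>x \<in> C2\<close> by (auto simp: connected_set_iff)
    then show "y \<in> C1"
      by (induction rule: rtrancl_induct) (use \<open>x \<in> C1\<close> closed in \<open>auto simp: adj_within_def\<close>)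
  qed
  from sub[OF assms] sub[OF assms(2,1,4,3)] show ?thesis by blast
qed

lemma sym_delete_verts:
  "\<forall>x y. mult G x y = mult G y x \<Longrightarrow> \<forall>x y. mult (delete_verts G X) x y = mult (delete_verts G X) y x"
  by (simp add: delete_verts_def)

definition edges_between :: "'a mgraph \<Rightarrow> 'a set \<Rightarrow> 'a set \<Rightarrow> nat" where
  "edges_between G A B = (\<Sum>a\<in>A. \<Sum>b\<in>B. mult G a b)"

lemma edges_between_singleton: "edges_between G {a} B = (\<Sum>b\<in>B. mult G a b)"
  by (simp add: edges_between_def)

lemma edges_between_swap:
  assumes "\<forall>x y. mult G x y = mult G y x"
  shows "edges_between G B A = edges_between G A B"
  unfolding edges_between_def using assms by (subst sum.swap) simp

lemma theta_minor_iff: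
  "has_minor G (theta c) \<longleftrightarrow> (\<exists>A B. connected_set G A \<and> connected_set G B \<and> A \<inter> B = {}
     \<and> c \<le> edges_between G A B \<and> c \<le> edges_between G B A)"
proof
  assume "has_minor G (theta c)"
  then obtain \<phi> :: "nat \<Rightarrow> 'a set" where
    "\<forall>x\<in>{0,1}. connected_set G (\<phi> x)"
    "\<forall>x\<in>{0::nat,1}. \<forall>y\<in>{0,1}. x \<noteq> y \<longrightarrow> \<phi> x \<inter> \<phi> y = {}"
    "\<forall>x\<in>{0::nat,1}. \<forall>y\<in>{0,1}. x \<noteq> y \<longrightarrow>
        mult (theta c) x y \<le> edges_between G (\<phi> x) (\<phi> y)"
    unfolding has_minor_def edges_between_def by (auto simp: theta_def)
  then show "\<exists>A B. connected_set G A \<and> connected_set G B \<and> A \<inter> B = {}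
     \<and> c \<le> edges_between G A B \<and> c \<le> edges_between G B A"
    by (intro exI[of _ "\<phi> 0"] exI[of _ "\<phi> 1"]) (auto simp: theta_def)
next
  assume "\<exists>A B. connected_set G A \<and> connected_set G B \<and> A \<inter> B = {}
     \<and> c \<le> edges_between G A B \<and> c \<le> edges_between G B A"
  then obtain A B where "connected_set G A" "connected_set G B" "A \<inter> B = {}"
    "c \<le> edges_between G A B" "c \<le> edges_between G B A" by blast
  then show "has_minor G (theta c)"
    unfolding has_minor_def edges_between_def
    by (intro exI[of _ "\<lambda>x::nat. if x = 0 then A else B"]) (auto simp: theta_def)
qed

lemma theta_minor_sym_iff:
  assumes "\<forall>x y. mult G x y = mult G y x"
  shows "has_minor G (theta c) \<longleftrightarrow> (\<exists>A B. connected_set G A \<and> connected_set G B \<and> A \<inter> B = {}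
     \<and> c \<le> edges_between G A B)"
proof -
  have "edges_between G B A = edges_between G A B" for A B
    by (rule edges_between_swap[OF assms])
  then show ?thesis unfolding theta_minor_iff by metis
qed

definition subg :: "'a mgraph \<Rightarrow> 'a mgraph \<Rightarrow> bool" where
  "subg G1 G2 \<longleftrightarrow> verts G1 \<subseteq> verts G2 \<and>
     (\<forall>a\<in>verts G1. \<forall>b\<in>verts G1. mult G1 a b \<le> mult G2 a b)"

lemma connected_subg:
  assumes "subg G1 G2" "connected_set G1 X"
  shows "connected_set G2 X"
proof -
  have X: "X \<subseteq> verts G1" using assms(2) by (simp add: connected_set_iff)
  have "adj_within G1 X \<subseteq> adj_within G2 X"
  proof
    fix p assume "p \<in> adj_within G1 X"
    then obtain a b where p: "p = (a, b)" "a \<in> X" "b \<in> X" "0 < mult G1 a b"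
      by (auto simp: adj_within_def adj_def)
    moreover have "mult G1 a b \<le> mult G2 a b" using assms(1) X p unfolding subg_def by blast
    ultimately show "p \<in> adj_within G2 X" by (auto simp: adj_within_def adj_def)
  qed
  then have "(adj_within G1 X)\<^sup>* \<subseteq> (adj_within G2 X)\<^sup>*" by (rule rtrancl_mono)
  with assms show ?thesis unfolding connected_set_iff subg_def by blast
qed

lemma edges_between_subg:
  assumes "subg G1 G2" "A \<subseteq> verts G1" "B \<subseteq> verts G1"
  shows "edges_between G1 A B \<le> edges_between G2 A B"
  unfolding edges_between_def using assms unfolding subg_def by (intro sum_mono) blast

lemma theta_free_subg:
  assumes "subg G1 G2" "theta_free c G2"
  shows "theta_free c G1"
proof -
  have "has_minor G2 (theta c)" if minor: "has_minor G1 (theta c)"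
  proof -
    obtain A B where AB: "connected_set G1 A" "connected_set G1 B" "A \<inter> B = {}"
      "c \<le> edges_between G1 A B" "c \<le> edges_between G1 B A"
      using minor unfolding theta_minor_iff by blast
    then have "A \<subseteq> verts G1" "B \<subseteq> verts G1" by (auto simp: connected_set_iff)
    with AB show ?thesis unfolding theta_minor_iff
      using connected_subg[OF assms(1)] edges_between_subg[OF assms(1)] by (meson order_trans)
  qed
  with assms show ?thesis unfolding theta_free_def by blast
qed

definition res :: "'a mgraph \<Rightarrow> 'a set \<Rightarrow> 'a mgraph" where
  "res G W = delete_verts G (verts G - W)"

lemma verts_res[simp]: "verts (res G W) = verts G \<inter> W"
  by (auto simp: res_def delete_verts_def)

lemma mult_res[simp]: "a \<in> W \<Longrightarrow> b \<in> W \<Longrightarrow> mult (res G W) a b = mult G a b"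
  by (auto simp: res_def delete_verts_def)

lemma subg_res_delete:
  assumes "(verts H - X) \<inter> W \<subseteq> verts H' - Y"
    and "\<And>a b. a \<in> (verts H - X) \<inter> W \<Longrightarrow> b \<in> (verts H - X) \<inter> W \<Longrightarrow> mult H a b \<le> mult H' a b"
  shows "subg (res (delete_verts H X) W) (delete_verts H' Y)"
  using assms unfolding subg_def by (auto simp: delete_verts_def)

definition vertex_split :: "'a mgraph \<Rightarrow> 'a \<Rightarrow> 'a set \<Rightarrow> 'a set \<Rightarrow> bool" where
  "vertex_split H v V1 V2 \<longleftrightarrow> verts H \<subseteq> V1 \<union> V2 \<and> V1 \<inter> V2 \<subseteq> {v} \<and>
     (\<forall>a\<in>V1 - V2. \<forall>b\<in>V2 - V1. mult H a b = 0 \<and> mult H b a = 0)"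

lemma vertex_split_swap: "vertex_split H v V1 V2 \<Longrightarrow> vertex_split H v V2 V1"
  unfolding vertex_split_def by blast

lemma vertex_split_edge:
  assumes split: "vertex_split H v V1 V2" and "y \<in> V1 - V2" "z \<in> verts H"
    and "0 < mult H y z"
  shows "z \<in> V1"
proof (rule ccontr)
  assume "z \<notin> V1"
  then have "z \<in> V2 - V1" using split \<open>z \<in> verts H\<close> by (auto simp: vertex_split_def)
  then have "mult H y z = 0" using split \<open>y \<in> V1 - V2\<close> by (simp add: vertex_split_def)
  with \<open>0 < mult H y z\<close> show False by simp
qed

lemma vertex_split_path:
  assumes split: "vertex_split H v V1 V2" and A: "A \<subseteq> verts H" and x: "x \<in> A \<inter> V1"
    and path: "(x, y) \<in> (adj_within H A)\<^sup>*"
  shows "(y \<in> V1 \<longrightarrow> (x, y) \<in> (adj_within (res H V1) (A \<inter> V1))\<^sup>*) \<and>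
         (y \<notin> V1 \<longrightarrow> v \<in> A \<and> (x, v) \<in> (adj_within (res H V1) (A \<inter> V1))\<^sup>*)"
  using path
proof (induction rule: rtrancl_induct)
  case base
  then show ?case using x by auto
next
  case (step y z)
  have yz: "y \<in> A" "z \<in> A" "0 < mult H y z"
    using step.hyps(2) by (auto simp: adj_within_def adj_def)
  have cover: "verts H \<subseteq> V1 \<union> V2" and cap: "V1 \<inter> V2 \<subseteq> {v}"
    using split by (auto simp: vertex_split_def)
  show ?case
  proof (cases "y \<in> V1")
    case True
    then have IH: "(x, y) \<in> (adj_within (res H V1) (A \<inter> V1))\<^sup>*" using step.IH by blast
    show ?thesis
    proof (cases "z \<in> V1")
      case True
      then have "(y, z) \<in> adj_within (res H V1) (A \<inter> V1)"
        using yz \<open>y \<in> V1\<close> by (auto simp: adj_within_def adj_def)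
      with IH True show ?thesis by (meson rtrancl.rtrancl_into_rtrancl)
    next
      case False
      then have "y \<notin> V1 - V2"
        using vertex_split_edge[OF split _ _ yz(3)] yz(2) A by blast
      then have "y = v" using \<open>y \<in> V1\<close> cap by blast
      with False IH yz show ?thesis by auto
    qed
  next
    case False
    then have "v \<in> A \<and> (x, v) \<in> (adj_within (res H V1) (A \<inter> V1))\<^sup>*" using step.IH by blast
    moreover have "z = v" if "z \<in> V1"
    proof -
      have "y \<in> V2 - V1" using False yz(1) A cover by blast
      then have "z \<in> V2"
        using vertex_split_edge[OF vertex_split_swap[OF split] _ _ yz(3)] yz(2) A by blast
      with that cap show ?thesis by blast
    qed
    ultimately show ?thesis by auto
  qed
qed

lemma vertex_split_connected_restrict:
  assumes split: "vertex_split H v V1 V2" and conn: "connected_set H A" and "A \<inter> V1 \<noteq> {}"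
  shows "connected_set (res H V1) (A \<inter> V1)"
proof -
  have A: "A \<subseteq> verts H" using conn by (simp add: connected_set_iff)
  have "(x, y) \<in> (adj_within (res H V1) (A \<inter> V1))\<^sup>*" if "x \<in> A \<inter> V1" "y \<in> A \<inter> V1" for x y
  proof -
    have "(x, y) \<in> (adj_within H A)\<^sup>*" using conn that unfolding connected_set_iff by blast
    with vertex_split_path[OF split A that(1)] that(2) show ?thesis by blast
  qed
  with \<open>A \<inter> V1 \<noteq> {}\<close> A show ?thesis unfolding connected_set_iff by auto
qed

lemma vertex_split_connected_side:
  assumes split: "vertex_split H v V1 V2" and conn: "connected_set H A" and "v \<notin> A"
  shows "A \<subseteq> V1 \<or> A \<subseteq> V2"
proof (rule ccontr)
  assume "\<not> ?thesis"
  then obtain y z where y: "y \<in> A" "y \<notin> V1" and z: "z \<in> A" "z \<notin> V2" by blast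
  have A: "A \<subseteq> verts H" using conn by (simp add: connected_set_iff)
  then have "z \<in> A \<inter> V1" using z split unfolding vertex_split_def by blast
  moreover have "(z, y) \<in> (adj_within H A)\<^sup>*" using conn y z unfolding connected_set_iff by blast
  ultimately show False using vertex_split_path[OF split A] y \<open>v \<notin> A\<close> by blast
qed

text \<open>If the branch set B of a theta minor avoids v and lies in V1, then restricting the
  other branch set to V1 loses no edge towards B, so the minor survives in H[V1].\<close>
lemma vertex_split_theta_one_side:
  assumes split: "vertex_split H v V1 V2" and fin: "finite (verts H)" and "1 \<le> c"
    and A: "connected_set H A" and B: "connected_set H B" and "A \<inter> B = {}"
    and AB: "c \<le> edges_between H A B" and BA: "c \<le> edges_between H B A"
    and BV1: "B \<subseteq> V1" and "v \<notin> B"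
  shows "has_minor (res H V1) (theta c)"
proof -
  have AV: "A \<subseteq> verts H" using A by (simp add: connected_set_iff)
  then have finA: "finite A" using fin by (rule finite_subset)
  have no_edge: "mult H a b = 0 \<and> mult H b a = 0" if "a \<in> A - V1" "b \<in> B" for a b
  proof -
    have "a \<in> V2 - V1" using that AV split by (auto simp: vertex_split_def)
    moreover have "b \<in> V1 - V2" using that BV1 \<open>v \<notin> B\<close> split by (auto simp: vertex_split_def)
    ultimately show ?thesis using split by (simp add: vertex_split_def)
  qed
  have eAB: "edges_between H A B = edges_between (res H V1) (A \<inter> V1) B"
  proof -
    have "edges_between H A B = edges_between H (A \<inter> V1) B"
      unfolding edges_between_def by (rule sum.mono_neutral_right[OF finA]) (auto simp: no_edge)
    also have "\<dots> = edges_between (res H V1) (A \<inter> V1) B"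
      unfolding edges_between_def using BV1 by (intro sum.cong refl) auto
    finally show ?thesis .
  qed
  have eBA: "edges_between H B A = edges_between (res H V1) B (A \<inter> V1)"
  proof -
    have "edges_between H B A = edges_between H B (A \<inter> V1)"
      unfolding edges_between_def
      by (rule sum.cong[OF refl], rule sum.mono_neutral_right[OF finA]) (auto simp: no_edge)
    also have "\<dots> = edges_between (res H V1) B (A \<inter> V1)"
      unfolding edges_between_def using BV1 by (intro sum.cong refl) auto
    finally show ?thesis .
  qed
  have "A \<inter> V1 \<noteq> {}"
  proof
    assume "A \<inter> V1 = {}"
    then have "edges_between H A B = 0" using eAB by (simp add: edges_between_def)
    with AB \<open>1 \<le> c\<close> show False by simp
  qed
  then have A1: "connected_set (res H V1) (A \<inter> V1)"
    by (rule vertex_split_connected_restrict[OF split A])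
  have "B \<noteq> {}" using B by (simp add: connected_set_def)
  with BV1 have "B \<inter> V1 \<noteq> {}" by blast
  from vertex_split_connected_restrict[OF split B this]
  have B1: "connected_set (res H V1) B" using BV1 by (simp add: Int_absorb2)
  have "(A \<inter> V1) \<inter> B = {}" using \<open>A \<inter> B = {}\<close> by blast
  with A1 B1 AB BA show ?thesis unfolding theta_minor_iff eAB eBA by blast
qed

lemma vertex_split_theta_some_side:
  assumes split: "vertex_split H v V1 V2" and fin: "finite (verts H)" and "1 \<le> c"
    and A: "connected_set H A" and B: "connected_set H B" and "A \<inter> B = {}"
    and AB: "c \<le> edges_between H A B" and BA: "c \<le> edges_between H B A"
    and "v \<notin> B"
  shows "has_minor (res H V1) (theta c) \<or> has_minor (res H V2) (theta c)"
proof -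
  have "B \<subseteq> V1 \<or> B \<subseteq> V2" by (rule vertex_split_connected_side[OF split B \<open>v \<notin> B\<close>])
  then show ?thesis
  proof
    assume "B \<subseteq> V1"
    with vertex_split_theta_one_side[OF split fin \<open>1 \<le> c\<close> A B \<open>A \<inter> B = {}\<close> AB BA]
    show ?thesis using \<open>v \<notin> B\<close> by blast
  next
    assume "B \<subseteq> V2"
    with vertex_split_theta_one_side[OF vertex_split_swap[OF split] fin \<open>1 \<le> c\<close> A B
        \<open>A \<inter> B = {}\<close> AB BA]
    show ?thesis using \<open>v \<notin> B\<close> by blast
  qed
qed

lemma theta_free_vertex_split:
  assumes split: "vertex_split H v V1 V2" and fin: "finite (verts H)" and "1 \<le> c"
    and free1: "theta_free c (res H V1)" and free2: "theta_free c (res H V2)"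
  shows "theta_free c H"
  unfolding theta_free_def
proof
  assume "has_minor H (theta c)"
  then obtain A B where AB: "connected_set H A" "connected_set H B" "A \<inter> B = {}"
    "c \<le> edges_between H A B" "c \<le> edges_between H B A"
    unfolding theta_minor_iff by blast
  have "has_minor (res H V1) (theta c) \<or> has_minor (res H V2) (theta c)"
  proof (cases "v \<in> B")
    case False
    with vertex_split_theta_some_side[OF split fin \<open>1 \<le> c\<close> AB] show ?thesis by blast
  next
    case True
    then have "v \<notin> A" using AB(3) by blast
    moreover have "B \<inter> A = {}" using AB(3) by blast
    ultimately show ?thesis
      using vertex_split_theta_some_side[OF split fin \<open>1 \<le> c\<close> AB(2,1) _ AB(5,4)] by blast
  qed
  with free1 free2 show False unfolding theta_free_def by blast
qed

text \<open>The setting of the theorem, with the hypothesis c >= 2 weakened to c >= 1.\<close>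
locale theta_reduction =
  fixes G :: "'a mgraph" and c :: nat and v :: 'a and Hv S :: "'a set" and T :: "'a set set"
  assumes wf: "wf_mgraph G"
    and c_pos: "1 \<le> c"
    and v_vert: "v \<in> verts G"
    and Hv_verts: "Hv \<subseteq> verts G - {v}"
    and Hv_free: "theta_free c (delete_verts G Hv)"
    and S_Hv: "S \<subseteq> Hv"
    and T_D: "T \<subseteq> D_comps G v Hv"
    and stars: "has_c_stars c G S T"
    and T_nbrs_in_S: "\<forall>C\<in>T. \<forall>w\<in>Hv. badj G w C \<longrightarrow> w \<in> S"
begin

abbreviation U :: "'a set" where "U \<equiv> \<Union>T"

abbreviation GR :: "'a mgraph" where "GR \<equiv> reduce c G v S T"

lemma finite_verts: "finite (verts G)"
  and sym_G: "\<forall>x y. mult G x y = mult G y x"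
  and edge_verts: "0 < mult G x y \<Longrightarrow> y \<in> verts G"
  using wf unfolding wf_mgraph_def by auto

lemma T_component: "C \<in> T \<Longrightarrow> C \<in> components (delete_verts G (insert v Hv))"
  using T_D by (auto simp: D_comps_def)

lemma T_connected: "C \<in> T \<Longrightarrow> connected_set (delete_verts G (insert v Hv)) C"
  using T_component by (simp add: components_def)

lemma T_verts: "C \<in> T \<Longrightarrow> C \<subseteq> verts G - insert v Hv"
  using T_connected[unfolded connected_set_def] by (simp add: delete_verts_def)

lemma T_closed:
  assumes "C \<in> T" "x \<in> C" "y \<in> verts G - insert v Hv" "adj G x y"
  shows "y \<in> C"
proof -
  have "x \<notin> insert v Hv" using T_verts assms(1,2) by blast
  with assms T_component[OF assms(1)] show ?thesis
    by (auto simp: components_def delete_verts_def adj_def)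
qed

lemma T_nbr_v: "C \<in> T \<Longrightarrow> \<exists>x\<in>C. adj G v x"
  using T_D by (auto simp: D_comps_def)

lemma T_disjoint: "C1 \<in> T \<Longrightarrow> C2 \<in> T \<Longrightarrow> C1 \<noteq> C2 \<Longrightarrow> C1 \<inter> C2 = {}"
  using components_eq[OF T_component T_component] by blast

lemma U_verts: "U \<subseteq> verts G - insert v Hv"
  using T_verts by blast

lemma S_verts: "S \<subseteq> verts G" "v \<notin> S" and S_U_disjoint: "S \<inter> U = {}"
  using S_Hv Hv_verts U_verts by auto

lemma U_neighbour:
  assumes "p \<in> U" "0 < mult G p y"
  shows "y \<in> insert v (U \<union> S)"
proof -
  obtain C where C: "C \<in> T" "p \<in> C" using assms(1) by blast
  have y: "y \<in> verts G" using edge_verts assms(2) .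
  consider "y = v" | "y \<in> Hv" | "y \<in> verts G - insert v Hv" using y by blast
  then show ?thesis
  proof cases
    case 2
    have "0 < mult G y p" using assms(2) sym_G by metis
    then have "badj G y C" using C by (auto simp: badj_def adj_def)
    then show ?thesis using T_nbrs_in_S C 2 by blast
  next
    case 3
    then have "y \<in> C" using T_closed[OF C] assms(2) by (simp add: adj_def)
    then show ?thesis using C by blast
  qed simp
qed

lemma verts_GR: "verts GR = verts G"
  by (simp add: reduce_def)

lemma sym_GR: "\<forall>x y. mult GR x y = mult GR y x"
  using sym_G unfolding reduce_def by auto

lemma mult_GR_off_v: "a \<noteq> v \<Longrightarrow> b \<noteq> v \<Longrightarrow> mult GR a b = mult G a b"
  by (simp add: reduce_def)

lemma mult_GR_S: "w \<in> S \<Longrightarrow> c \<le> mult GR v w"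
  using S_U_disjoint S_verts by (auto simp: reduce_def)

lemma mult_GR_outside: "a \<notin> U \<union> S \<Longrightarrow> b \<notin> U \<union> S \<Longrightarrow> mult GR a b = mult G a b"
  by (auto simp: reduce_def)

lemma mult_G_le_GR: "a \<notin> U \<Longrightarrow> b \<notin> U \<Longrightarrow> mult G a b \<le> mult GR a b"
  by (auto simp: reduce_def)

lemma mult_GR_le_G_near_U: "a \<in> insert v U \<Longrightarrow> b \<in> insert v U \<Longrightarrow> mult GR a b \<le> mult G a b"
  using S_U_disjoint S_verts by (auto simp: reduce_def)

lemma delete_GR_v: "v \<in> X \<Longrightarrow> delete_verts GR X = delete_verts G X"
  by (auto simp: reduce_def delete_verts_def fun_eq_iff)

lemma star_connected:
  assumes w: "w \<in> S" "w \<notin> X" and F: "F \<subseteq> T" "\<forall>C\<in>F. badj G w C"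
    and avoid: "\<forall>C\<in>F. C \<inter> X = {}"
  shows "connected_set (delete_verts G X) (insert w (\<Union>F))"
proof -
  define G' where "G' = delete_verts G X"
  define B where "B = insert w (\<Union>F)"
  have "\<Union>F \<subseteq> verts G" using F(1) U_verts by blast
  then have BV: "B \<subseteq> verts G'"
    using w avoid S_verts by (auto simp: B_def G'_def delete_verts_def)
  have "(x, w) \<in> (adj_within G' B)\<^sup>*" if x: "x \<in> \<Union>F" for x
  proof -
    obtain C where C: "C \<in> F" "x \<in> C" using x by blast
    obtain x0 where x0: "x0 \<in> C" "adj G w x0" using F(2) C(1) by (auto simp: badj_def)
    have "adj_within (delete_verts G (insert v Hv)) C \<subseteq> adj_within G' B"
      using C avoid by (auto simp: adj_within_def adj_def G'_def B_def delete_verts_def)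
    moreover have "(x, x0) \<in> (adj_within (delete_verts G (insert v Hv)) C)\<^sup>*"
      using T_connected C F(1) x0(1) unfolding connected_set_iff by blast
    ultimately have "(x, x0) \<in> (adj_within G' B)\<^sup>*" using rtrancl_mono by blast
    moreover have "(x0, w) \<in> adj_within G' B"
      using x0 C avoid w sym_G by (auto simp: adj_within_def adj_def G'_def B_def delete_verts_def)
    ultimately show ?thesis by (rule rtrancl.rtrancl_into_rtrancl)
  qed
  then have reach: "\<forall>x\<in>B. (x, w) \<in> (adj_within G' B)\<^sup>*" by (auto simp: B_def)
  have "connected_set G' B"
    by (rule connected_if_all_reach[OF _ _ BV reach])
      (simp_all add: G'_def B_def sym_delete_verts[OF sym_G])
  then show ?thesis by (simp add: G'_def B_def)
qed

text \<open>Every T-component has an edge to v, and T-components are disjoint, so v sends at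
  least card F edges into the union of F.\<close>
lemma star_edges_from_v:
  assumes "v \<notin> X" and F: "F \<subseteq> T" "finite F" and avoid: "\<forall>C\<in>F. C \<inter> X = {}"
  shows "card F \<le> edges_between (delete_verts G X) {v} (\<Union>F)"
proof -
  define G' where "G' = delete_verts G X"
  have finC: "\<forall>C\<in>F. finite C"
  proof
    fix C assume "C \<in> F"
    then have "C \<subseteq> verts G" using F(1) U_verts by blast
    then show "finite C" using finite_verts by (rule finite_subset)
  qed
  have "card F = (\<Sum>C\<in>F. 1)" by simp
  also have "\<dots> \<le> (\<Sum>C\<in>F. \<Sum>b\<in>C. mult G' v b)"
  proof (rule sum_mono)
    fix C assume C: "C \<in> F"
    obtain x where x: "x \<in> C" "adj G v x" using T_nbr_v C F(1) by blast
    then have "1 \<le> mult G' v x"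
      using C avoid \<open>v \<notin> X\<close> by (auto simp: G'_def delete_verts_def adj_def)
    also have "\<dots> \<le> (\<Sum>b\<in>C. mult G' v b)" using finC C x by (intro member_le_sum) auto
    finally show "1 \<le> (\<Sum>b\<in>C. mult G' v b)" .
  qed
  also have "\<dots> = (\<Sum>b\<in>\<Union>F. mult G' v b)"
  proof -
    have "\<forall>C1\<in>F. \<forall>C2\<in>F. C1 \<noteq> C2 \<longrightarrow> C1 \<inter> C2 = {}" using T_disjoint F(1) by blast
    from sum.Union_disjoint[OF finC this, of "mult G' v"] show ?thesis by (simp add: comp_def)
  qed
  finally show ?thesis by (simp add: edges_between_singleton G'_def)
qed

text \<open>In a solution X avoiding v, every vertex of S outside X has one of its c-star
  components hit by X: otherwise v and the star would form a theta_c minor.\<close>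
lemma star_meets_solution:
  assumes "v \<notin> X" and free: "theta_free c (delete_verts G X)"
    and w: "w \<in> S" "w \<notin> X" and F: "F \<subseteq> T" "card F = c" "\<forall>C\<in>F. badj G w C"
  shows "\<exists>C\<in>F. C \<inter> X \<noteq> {}"
proof (rule ccontr)
  assume "\<not> ?thesis"
  then have avoid: "\<forall>C\<in>F. C \<inter> X = {}" by blast
  define G' where "G' = delete_verts G X"
  define B where "B = insert w (\<Union>F)"
  have conn_B: "connected_set G' B"
    using star_connected[OF w F(1,3) avoid] by (simp add: G'_def B_def)
  have conn_v: "connected_set G' {v}"
    using v_vert \<open>v \<notin> X\<close> by (intro connected_singleton) (simp add: G'_def delete_verts_def)
  have "v \<notin> B" using F(1) U_verts S_verts w by (auto simp: B_def)
  have finF: "finite F" using F(2) c_pos by (intro card_ge_0_finite) simp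
  have finB: "finite B" using conn_B finite_verts
    by (auto simp: connected_set_iff G'_def delete_verts_def intro: finite_subset)
  have "c \<le> edges_between G' {v} (\<Union>F)"
    using star_edges_from_v[OF \<open>v \<notin> X\<close> F(1) finF avoid] F(2) by (simp add: G'_def)
  also have "\<dots> \<le> edges_between G' {v} B"
    unfolding edges_between_singleton by (rule sum_mono2[OF finB]) (auto simp: B_def)
  finally have "c \<le> edges_between G' {v} B" .
  moreover have "{v} \<inter> B = {}" using \<open>v \<notin> B\<close> by blast
  moreover have "\<forall>x y. mult G' x y = mult G' y x"
    unfolding G'_def by (rule sym_delete_verts[OF sym_G])
  ultimately have "has_minor G' (theta c)"
    using conn_v conn_B by (subst theta_minor_sym_iff) blast+
  with free show False by (simp add: theta_free_def G'_def)
qed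

text \<open>Exchange argument: if X is a solution for G avoiding v, the vertices of S outside X
  can be charged injectively to vertices of X inside U, one per hit star.\<close>
lemma card_S_outside_solution:
  assumes "v \<notin> X" and free: "theta_free c (delete_verts G X)"
  shows "card (S - X) \<le> card (X \<inter> U)"
proof -
  obtain F where F: "\<forall>w\<in>S. F w \<subseteq> {C \<in> T. badj G w C} \<and> card (F w) = c"
    and F_disj: "\<forall>w1\<in>S. \<forall>w2\<in>S. w1 \<noteq> w2 \<longrightarrow> F w1 \<inter> F w2 = {}"
    using stars unfolding has_c_stars_def by blast
  have "\<forall>w\<in>S - X. \<exists>x. x \<in> X \<and> (\<exists>C\<in>F w. x \<in> C)"
  proof
    fix w assume w: "w \<in> S - X"
    have "F w \<subseteq> T" "card (F w) = c" "\<forall>C\<in>F w. badj G w C" using F w by auto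
    from star_meets_solution[OF \<open>v \<notin> X\<close> free _ _ this] w show "\<exists>x. x \<in> X \<and> (\<exists>C\<in>F w. x \<in> C)"
      by blast
  qed
  then obtain g where g: "\<And>w. w \<in> S - X \<Longrightarrow> g w \<in> X \<and> (\<exists>C\<in>F w. g w \<in> C)" by metis
  have "g ` (S - X) \<subseteq> X \<inter> U"
  proof
    fix y assume "y \<in> g ` (S - X)"
    then obtain w where w: "w \<in> S - X" "y = g w" by blast
    with g[OF w(1)] F show "y \<in> X \<inter> U" by blast
  qed
  moreover have "inj_on g (S - X)"
  proof
    fix w1 w2 assume w: "w1 \<in> S - X" "w2 \<in> S - X" "g w1 = g w2"
    obtain C1 where C1: "C1 \<in> F w1" "g w1 \<in> C1" using g[OF w(1)] by blast
    obtain C2 where C2: "C2 \<in> F w2" "g w1 \<in> C2" using g[OF w(2)] w(3) by auto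
    have "C1 \<in> T" "C2 \<in> T" using C1(1) C2(1) F w(1,2) by blast+
    then have "C1 = C2" using T_disjoint C1(2) C2(2) by blast
    then show "w1 = w2" using F_disj C1(1) C2(1) w(1,2) by blast
  qed
  moreover have "finite (X \<inter> U)" using U_verts finite_verts by (auto intro: finite_subset)
  ultimately show ?thesis by (simp add: card_inj_on_le)
qed

lemma card_exchange:
  assumes "v \<notin> X" "finite X" and free: "theta_free c (delete_verts G X)"
  shows "card ((X - U) \<union> S) \<le> card X"
proof -
  have "(X - U) \<union> S = (X - U) \<union> (S - X)" using S_U_disjoint by blast
  then have "card ((X - U) \<union> S) \<le> card (X - U) + card (S - X)" by (simp add: card_Un_le)
  also have "\<dots> \<le> card (X - U) + card (X \<inter> U)"
    using card_S_outside_solution[OF \<open>v \<notin> X\<close> free] by simp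
  also have "\<dots> = card ((X - U) \<union> (X \<inter> U))"
    using \<open>finite X\<close> by (intro card_Un_disjoint[symmetric]) auto
  also have "\<dots> = card X" by (simp add: Un_Diff_Int)
  finally show ?thesis .
qed

lemma G_or_GR:
  assumes "H \<in> {G, GR}"
  shows "verts H = verts G"
    and "a \<noteq> v \<Longrightarrow> b \<noteq> v \<Longrightarrow> mult H a b = mult G a b"
    and "a \<in> insert v U \<Longrightarrow> b \<in> insert v U \<Longrightarrow> mult H a b \<le> mult G a b"
proof -
  from assms have H: "H = G \<or> H = GR" by simp
  show "verts H = verts G" using H verts_GR by auto
  show "mult H a b = mult G a b" if "a \<noteq> v" "b \<noteq> v"
    using H mult_GR_off_v[OF that] by auto
  show "mult H a b \<le> mult G a b" if "a \<in> insert v U" "b \<in> insert v U"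
    using H mult_GR_le_G_near_U[OF that] by auto
qed

text \<open>Once S is deleted (and v is kept), v separates U from the rest of the graph, and the
  U side together with v is a subgraph of G - Hv, hence theta-free.\<close>
lemma theta_free_cut_at_v:
  assumes H: "H \<in> {G, GR}" and "v \<notin> X" "S \<subseteq> X"
    and outer_free: "theta_free c (res (delete_verts H X) (verts G - X - U))"
  shows "theta_free c (delete_verts H X)"
proof -
  define V1 where "V1 = verts G - X - U"
  define V2 where "V2 = insert v (U - X)"
  have no_edge: "mult (delete_verts H X) a b = 0 \<and> mult (delete_verts H X) b a = 0"
    if a: "a \<in> V1 - V2" and b: "b \<in> V2 - V1" for a b
  proof -
    have "a \<noteq> v" "a \<notin> U" "a \<notin> X" "a \<notin> S" using a \<open>S \<subseteq> X\<close> by (auto simp: V1_def V2_def)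
    moreover have "b \<in> U" "b \<noteq> v" "b \<notin> X" using b v_vert \<open>v \<notin> X\<close> U_verts
      by (auto simp: V1_def V2_def)
    ultimately have "mult G b a = 0" using U_neighbour[of b a] by (metis Un_iff insertE neq0_conv)
    then have "mult H a b = 0 \<and> mult H b a = 0"
      using G_or_GR(2)[OF H] sym_G \<open>a \<noteq> v\<close> \<open>b \<noteq> v\<close> by metis
    then show ?thesis by (simp add: delete_verts_def)
  qed
  have split: "vertex_split (delete_verts H X) v V1 V2"
    unfolding vertex_split_def using G_or_GR(1)[OF H] no_edge
    by (auto simp: V1_def V2_def delete_verts_def)
  have "subg (res (delete_verts H X) V2) (delete_verts G Hv)"
  proof (rule subg_res_delete)
    show "(verts H - X) \<inter> V2 \<subseteq> verts G - Hv"
      using G_or_GR(1)[OF H] Hv_verts U_verts by (auto simp: V2_def)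
    show "mult H a b \<le> mult G a b" if "a \<in> (verts H - X) \<inter> V2" "b \<in> (verts H - X) \<inter> V2" for a b
      using that G_or_GR(3)[OF H, of a b] by (auto simp: V2_def)
  qed
  then have "theta_free c (res (delete_verts H X) V2)"
    using Hv_free by (rule theta_free_subg)
  moreover have "finite (verts (delete_verts H X))"
    using G_or_GR(1)[OF H] finite_verts by (simp add: delete_verts_def)
  ultimately show ?thesis
    using theta_free_vertex_split[OF split _ c_pos] outer_free by (simp add: V1_def)
qed

text \<open>Forward direction: a solution X for G avoiding v is replaced by (X - U) \<union> S.\<close>
lemma solution_reduced_if_solution:
  assumes "theta_deletion_set c k G"
  shows "theta_deletion_set c k GR"
proof -
  obtain X where X: "X \<subseteq> verts G" "card X \<le> k" and free: "theta_free c (delete_verts G X)"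
    using assms unfolding theta_deletion_set_def by blast
  show ?thesis
  proof (cases "v \<in> X")
    case True
    then show ?thesis using X free delete_GR_v verts_GR unfolding theta_deletion_set_def by metis
  next
    case False
    define X' where "X' = (X - U) \<union> S"
    have "finite X" using X(1) finite_verts by (rule finite_subset)
    then have "card X' \<le> k" using card_exchange[OF False _ free] X(2) by (simp add: X'_def)
    moreover have "X' \<subseteq> verts GR" using X(1) S_verts verts_GR by (auto simp: X'_def)
    moreover have "theta_free c (delete_verts GR X')"
    proof (rule theta_free_cut_at_v)
      show "v \<notin> X'" "S \<subseteq> X'" using False S_verts by (auto simp: X'_def)
      have "subg (res (delete_verts GR X') (verts G - X' - U)) (delete_verts G X)"
      proof (rule subg_res_delete)
        show "(verts GR - X') \<inter> (verts G - X' - U) \<subseteq> verts G - X"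
          by (auto simp: X'_def)
        show "mult GR a b \<le> mult G a b"
          if "a \<in> (verts GR - X') \<inter> (verts G - X' - U)" "b \<in> (verts GR - X') \<inter> (verts G - X' - U)"
          for a b
          using that mult_GR_outside[of a b] by (auto simp: X'_def)
      qed
      then show "theta_free c (res (delete_verts GR X') (verts G - X' - U))"
        using free by (rule theta_free_subg)
    qed simp
    ultimately show ?thesis unfolding theta_deletion_set_def by blast
  qed
qed

text \<open>A solution for G_R avoiding v must contain S, since v and each vertex of S are joined
  by c parallel edges in G_R.\<close>
lemma S_in_reduced_solution:
  assumes "v \<notin> X" and free: "theta_free c (delete_verts GR X)"
  shows "S \<subseteq> X"
proof
  fix w assume "w \<in> S"
  show "w \<in> X"
  proof (rule ccontr)
    assume "w \<notin> X"
    define G' where "G' = delete_verts GR X"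
    have "connected_set G' {v}" "connected_set G' {w}"
      using \<open>v \<notin> X\<close> \<open>w \<notin> X\<close> \<open>w \<in> S\<close> v_vert S_verts verts_GR
      by (auto simp: G'_def delete_verts_def intro!: connected_singleton)
    moreover have "{v} \<inter> {w} = {}" using \<open>w \<in> S\<close> S_verts by auto
    moreover have "c \<le> edges_between G' {v} {w}"
      using mult_GR_S[OF \<open>w \<in> S\<close>] \<open>v \<notin> X\<close> \<open>w \<notin> X\<close>
      by (simp add: edges_between_singleton G'_def delete_verts_def)
    moreover have "\<forall>x y. mult G' x y = mult G' y x"
      unfolding G'_def by (rule sym_delete_verts[OF sym_GR])
    ultimately have "has_minor G' (theta c)" by (subst theta_minor_sym_iff) blast+
    with free show False by (simp add: theta_free_def G'_def)
  qed
qed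

lemma solution_if_solution_reduced:
  assumes "theta_deletion_set c k GR"
  shows "theta_deletion_set c k G"
proof -
  obtain X where X: "X \<subseteq> verts G" "card X \<le> k" and free: "theta_free c (delete_verts GR X)"
    using assms verts_GR unfolding theta_deletion_set_def by metis
  show ?thesis
  proof (cases "v \<in> X")
    case True
    then show ?thesis using X free delete_GR_v unfolding theta_deletion_set_def by metis
  next
    case False
    have "theta_free c (delete_verts G X)"
    proof (rule theta_free_cut_at_v)
      show "S \<subseteq> X" by (rule S_in_reduced_solution[OF False free])
      have "subg (res (delete_verts G X) (verts G - X - U)) (delete_verts GR X)"
      proof (rule subg_res_delete)
        show "(verts G - X) \<inter> (verts G - X - U) \<subseteq> verts GR - X" using verts_GR by auto
        show "mult G a b \<le> mult GR a b"
          if "a \<in> (verts G - X) \<inter> (verts G - X - U)" "b \<in> (verts G - X) \<inter> (verts G - X - U)"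
          for a b
          using that mult_G_le_GR[of a b] by auto
      qed
      then show "theta_free c (res (delete_verts G X) (verts G - X - U))"
        using free by (rule theta_free_subg)
    qed (use False in simp_all)
    with X show ?thesis unfolding theta_deletion_set_def by blast
  qed
qed

end

theorem mainTheorem16:
  fixes G :: "'a mgraph" and c k :: nat and v :: 'a and Hv S :: "'a set"
    and T :: "'a set set"
  assumes "wf_mgraph G"
    and "c \<ge> 2"
    and "v \<in> verts G"
    and "Hv \<subseteq> verts G - {v}"
    and "theta_free c (delete_verts G Hv)"
    and "\<forall>C\<in>D_comps G v Hv. \<exists>x\<in>C. \<exists>w\<in>Hv. adj G x w"
    and "S \<subseteq> Hv"
    and "T \<subseteq> D_comps G v Hv"
    and "has_c_stars c G S T"
    and "\<forall>C\<in>T. \<forall>w\<in>Hv. badj G w C \<longrightarrow> w \<in> S"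
  shows "theta_deletion_set c k G \<longleftrightarrow> theta_deletion_set c k (reduce c G v S T)"
proof -
  interpret theta_reduction G c v Hv S T
    using assms by unfold_locales auto
  show ?thesis
    using solution_reduced_if_solution solution_if_solution_reduced by blast
qed

end
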